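(* Let $0<\alpha<2$ and let $X(t)$, $t\in T$ ($T\ne\emptyset$), be a separable symmetric $\alpha$-stable process. Let $\rho(s,t)$ be the scale parameter of $X(t)-X(s)$, assume $\sigma=\operatorname{diam}(T,\rho)<\infty$ and $(T,\rho)$ relatively compact, and let $N(\varepsilon)$ be the covering numbers of $(T,\rho)$. Assume $N(\varepsilon)\le\Psi(\varepsilon)$ for all $\varepsilon>0$, where $\Psi$ is a non-increasing continuous function satisfying $C_1\Psi(\varepsilon)\le\Psi(\varepsilon/2)$ for all $0<\varepsilon\le\sigma$, for some $C_1>1$. If $$\int_0^\sigma\Big(\frac{\Psi(u)}{u}\Big)^{\frac1{\alpha+1}}du<\infty,$$ then the process $X$ is almost surely bounded.
   Context: The scale parameter $\rho(s,t)$ is defined by $\mathbb{E}\exp\{iu(X(t)-X(s))\}=\exp\{-\rho(t,s)^\alpha|u|^\alpha\}$. A process is symmetric $\alpha$-stable if all finite-dimensional distributions are symmetric $\alpha$-stable vectors. $N(\varepsilon)$ is the minimal number of points $t_1,\dots,t_n\in T$ such that every $t\in T$ has $\rho(t,t_i)\le\varepsilon$ for some $i$. *)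

theory Defs
  imports "HOL-Probability.Probability"
begin

text \<open>A random vector indexed by a finite set F (the family X i, i in F) on the probability
space M is symmetric alpha-stable if its characteristic function has the form
exp(- integral over the unit sphere of |<u,s>|^alpha dGamma(s)) for a finite symmetric
measure Gamma (the spectral measure) on the unit sphere of R^F.\<close>
definition sas_vector :: "real \<Rightarrow> 'a measure \<Rightarrow> ('i \<Rightarrow> 'a \<Rightarrow> real) \<Rightarrow> 'i set \<Rightarrow> bool" where
  "sas_vector \<alpha> M X F \<longleftrightarrow>
     (\<exists>\<Gamma>. finite_measure \<Gamma> \<and> sets \<Gamma> = sets (PiM F (\<lambda>_. borel)) \<and>
          emeasure \<Gamma> {s \<in> space \<Gamma>. (\<Sum>i\<in>F. (s i)\<^sup>2) \<noteq> 1} = 0 \<and>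
          distr \<Gamma> (PiM F (\<lambda>_. borel)) (\<lambda>s. \<lambda>i\<in>F. - s i) = \<Gamma> \<and>
          (\<forall>u :: 'i \<Rightarrow> real.
             (CLINT \<omega>|M. iexp (\<Sum>i\<in>F. u i * X i \<omega>))
               = complex_of_real (exp (- (\<integral>s. \<bar>\<Sum>i\<in>F. u i * s i\<bar> powr \<alpha> \<partial>\<Gamma>)))))"

definition sas_process :: "real \<Rightarrow> 'a measure \<Rightarrow> ('t \<Rightarrow> 'a \<Rightarrow> real) \<Rightarrow> 't set \<Rightarrow> bool" where
  "sas_process \<alpha> M X T \<longleftrightarrow>
     (\<forall>t\<in>T. X t \<in> borel_measurable M) \<and>
     (\<forall>F. finite F \<and> F \<subseteq> T \<longrightarrow> sas_vector \<alpha> M X F)"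

definition scale_param :: "real \<Rightarrow> 'a measure \<Rightarrow> ('t \<Rightarrow> 'a \<Rightarrow> real) \<Rightarrow> 't \<Rightarrow> 't \<Rightarrow> real" where
  "scale_param \<alpha> M X s t =
     (THE r. r \<ge> 0 \<and> (\<forall>u::real. (CLINT \<omega>|M. iexp (u * (X t \<omega> - X s \<omega>)))
                 = complex_of_real (exp (- (r powr \<alpha> * \<bar>u\<bar> powr \<alpha>)))))"

definition pdiam :: "('t \<Rightarrow> 't \<Rightarrow> real) \<Rightarrow> 't set \<Rightarrow> real" where
  "pdiam d T = Sup {d s t | s t. s \<in> T \<and> t \<in> T}"

definition covering_number :: "('t \<Rightarrow> 't \<Rightarrow> real) \<Rightarrow> 't set \<Rightarrow> real \<Rightarrow> nat" where
  "covering_number d T \<epsilon> =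
     Inf {card S | S. finite S \<and> S \<subseteq> T \<and> (\<forall>t\<in>T. \<exists>s\<in>S. d t s \<le> \<epsilon>)}"

text \<open>(T,d) relatively compact, i.e. totally bounded: finite eps-nets exist for every eps > 0.\<close>
definition rel_compact :: "('t \<Rightarrow> 't \<Rightarrow> real) \<Rightarrow> 't set \<Rightarrow> bool" where
  "rel_compact d T \<longleftrightarrow>
     (\<forall>\<epsilon>>0. \<exists>S. finite S \<and> S \<subseteq> T \<and> (\<forall>t\<in>T. \<exists>s\<in>S. d t s \<le> \<epsilon>))"

definition separable_process :: "'a measure \<Rightarrow> ('t \<Rightarrow> 'a \<Rightarrow> real) \<Rightarrow> 't set \<Rightarrow> ('t \<Rightarrow> 't \<Rightarrow> real) \<Rightarrow> bool" where
  "separable_process M X T d \<longleftrightarrow>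
     (\<exists>T0 N. countable T0 \<and> T0 \<subseteq> T \<and> N \<in> null_sets M \<and>
        (\<forall>\<omega>\<in>space M - N. \<forall>t\<in>T. \<exists>s :: nat \<Rightarrow> 't. (\<forall>n. s n \<in> T0) \<and>
            (\<lambda>n. d (s n) t) \<longlonglongrightarrow> 0 \<and> (\<lambda>n. X (s n) \<omega>) \<longlonglongrightarrow> X t \<omega>))"

end

theory Submission
  imports Defs
begin

text \<open>
  Increments of a symmetric \<open>\<alpha>\<close>-stable process have polynomial tails: by the truncation
  inequality for characteristic functions,
  \<open>P(\<bar>X t - X s\<bar> \<ge> x) \<le> 2 * 2 powr \<alpha> * \<rho>(s,t) powr \<alpha> / x powr \<alpha>\<close>.
  Chain along minimal \<open>\<epsilon>\<^sub>k\<close>-nets \<open>S\<^sub>k\<close>, \<open>\<epsilon>\<^sub>k = \<sigma> / 2^k\<close>, linking every point of \<open>S\<^sub>k\<^sub>+\<^sub>1\<close> to a point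
  of \<open>S\<^sub>k\<close> within distance \<open>\<epsilon>\<^sub>k\<close>. With thresholds \<open>\<lambda> w\<^sub>k\<close>, \<open>w\<^sub>k = (\<epsilon>\<^sub>k\<^sup>\<alpha> N(\<epsilon>\<^sub>k\<^sub>+\<^sub>1))\<^bsup>1/(\<alpha>+1)\<^esup>\<close>, the union
  bound over all links costs \<open>\<lambda>\<^sup>-\<^sup>\<alpha> \<Sum> w\<^sub>k\<close>; letting \<open>\<lambda> \<rightarrow> \<infinity>\<close>, \<open>X\<close> is almost surely bounded on
  \<open>\<Union>\<^sub>k S\<^sub>k\<close>. Comparing \<open>w\<^sub>k\<close> with the integral of \<open>(\<Psi>(u)/u)\<^bsup>1/(\<alpha>+1)\<^esup>\<close> over
  \<open>(\<epsilon>\<^sub>k\<^sub>+\<^sub>2, \<epsilon>\<^sub>k\<^sub>+\<^sub>1]\<close> shows \<open>\<Sum> w\<^sub>k < \<infinity>\<close>. Finally, separability passes the bound from a countable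
  set to all of \<open>T\<close>.
\<close>

section \<open>Increments of symmetric stable processes\<close>

lemma interval_integral_one_minus_iexp:
  fixes u x :: real
  assumes "u > 0" and "x \<noteq> 0"
  shows "(CLBINT t:{-u..u}. 1 - iexp (t * x)) = 2 * (u - sin (u * x) / x)"
proof -
  have "(CLBINT t:{-u..u}. 1 - iexp (t * x)) = (CLBINT t=-u..u. 1 - iexp (t * x))"
    using assms by (subst interval_integral_Icc) auto
  also have "\<dots> = (CLBINT t=-u..ereal 0. 1 - iexp (t * x)) + (CLBINT t=ereal 0..u. 1 - iexp (t * x))"
    using assms by (subst interval_integral_sum; force simp add: interval_integrable_isCont)
  also have "\<dots> = (CLBINT t=ereal 0..u. 1 - iexp (t * -x)) + (CLBINT t=ereal 0..u. 1 - iexp (t * x))"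
    by (subst interval_integral_reflect) auto
  also have "\<dots> = (CLBINT t=ereal 0..u. 1 - iexp (t * -x) + (1 - iexp (t * x)))"
    by (subst interval_lebesgue_integral_add(2) [symmetric]) (auto simp: interval_integrable_isCont)
  also have "\<dots> = (LBINT t=ereal 0..u. 2 - 2 * cos (t * x))"
    unfolding exp_Euler cos_of_real by (simp flip: interval_lebesgue_integral_of_real)
  also have "\<dots> = 2 * u - 2 * sin (u * x) / x"
    by (subst interval_lebesgue_integral_diff)
       (auto intro!: interval_integrable_isCont
             simp: interval_lebesgue_integral_of_real integral_cos [OF \<open>x \<noteq> 0\<close>] mult.commute[of _ x])
  finally show ?thesis
    by (simp add: field_simps)
qed

lemma (in real_distribution) truncation_inequality:
  assumes "u > 0"
  shows "u * prob {x. 2 / u \<le> \<bar>x\<bar>} \<le> Re (CLBINT t:{-u..u}. 1 - char M t)"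
proof -
  interpret pair_sigma_finite M lborel ..
  define g where "g x = (if x = 0 then 0 else 2 * (u - sin (u * x) / x))" for x
  have integrable_prod: "set_integrable (M \<Otimes>\<^sub>M lborel) (UNIV \<times> {-u..u}) (\<lambda>(x, t). 1 - iexp (t * x))"
    using assms unfolding set_integrable_def
    by (intro integrableI_bounded_set_indicator [where B = 2])
       (auto simp: lborel.emeasure_pair_measure_Times ennreal_mult_less_top not_less top_unique
             split: split_indicator intro!: order_trans [OF norm_triangle_ineq4])
  have inner: "(CLBINT t:{-u..u}. 1 - iexp (t * x)) = complex_of_real (g x)" for x
    using assms by (simp add: g_def interval_integral_one_minus_iexp del: of_real_mult)
  have "(CLBINT t:{-u..u}. 1 - char M t) = (CLBINT t:{-u..u}. (CLINT x | M. 1 - iexp (t * x)))"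
    unfolding char_def
    by (intro set_lebesgue_integral_cong)
       (auto simp: prob_space[unfolded space_eq_univ] integrable_const_bound[where B = 1] del: of_real_mult)
  also have "\<dots> = (CLBINT t. (CLINT x | M. indicator {-u..u} t *\<^sub>R (1 - iexp (t * x))))"
    unfolding set_lebesgue_integral_def
    by (intro Bochner_Integration.integral_cong) (auto split: split_indicator)
  also have "\<dots> = (CLINT x | M. (CLBINT t:{-u..u}. 1 - iexp (t * x)))"
    using integrable_prod
    by (subst Fubini_integral)
       (auto simp: indicator_times split_beta' set_integrable_def set_lebesgue_integral_def)
  also have "\<dots> = complex_of_real (LINT x | M. g x)"
    by (simp add: inner del: of_real_mult)
  finally have char_eq: "Re (CLBINT t:{-u..u}. 1 - char M t) = (LINT x | M. g x)"
    by simp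
  have "complex_integrable M (\<lambda>x. CLBINT t:{-u..u}. 1 - iexp (snd (x, t) * fst (x, t)))"
    using integrable_prod unfolding set_integrable_def set_lebesgue_integral_def
    by (intro integrable_fst) (simp add: indicator_times split_beta')
  then have integrable_g: "integrable M g"
    by (simp add: inner complex_of_real_integrable_eq del: of_real_mult)
  \<comment> \<open>\<open>g \<ge> 0\<close> everywhere and \<open>g \<ge> u\<close> where \<open>\<bar>u x\<bar> \<ge> 2\<close>, since then \<open>\<bar>sin (u x) / x\<bar> \<le> u / 2\<close>.\<close>
  have "2 * sin y \<le> y" if "2 \<le> y" for y :: real
    by (rule order_trans[OF _ that]) auto
  moreover have "y \<le> 2 * sin y" if "y \<le> - 2" for y :: real
    by (rule order_trans[OF that]) auto
  moreover have "y < 0 \<Longrightarrow> y \<le> sin y" for y :: real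
    using sin_x_le_x[of "-y"] by simp
  ultimately have "(LINT x : {x. 2 / u \<le> \<bar>x\<bar>} | M. u) \<le> (LINT x | M. g x)"
    using assms unfolding set_lebesgue_integral_def g_def
    by (intro integral_mono [OF _ integrable_g[unfolded g_def]])
       (auto simp: divide_simps sin_x_le_x mult.commute[of u] mult_neg_pos top_unique less_top[symmetric]
             split: split_indicator)
  moreover have "(LINT x : {x. 2 / u \<le> \<bar>x\<bar>} | M. u) = u * prob {x. 2 / u \<le> \<bar>x\<bar>}"
    unfolding set_lebesgue_integral_def by (simp add: emeasure_eq_measure)
  ultimately show ?thesis
    using char_eq by simp
qed

lemma (in prob_space) symmetric_stable_tail:
  assumes Y: "random_variable borel Y" and "r \<ge> 0" and "\<alpha> > 0" and "x > 0"
    and char_Y: "\<And>u. (CLINT \<omega>|M. iexp (u * Y \<omega>)) = complex_of_real (exp (- (r powr \<alpha> * \<bar>u\<bar> powr \<alpha>)))"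
  shows "prob {\<omega>\<in>space M. x \<le> \<bar>Y \<omega>\<bar>} \<le> 2 * 2 powr \<alpha> * r powr \<alpha> / x powr \<alpha>"
proof -
  define D where "D = distr M borel Y"
  interpret D: real_distribution D
    unfolding D_def using Y by auto
  define v where "v = 2 / x"
  have "v > 0"
    using \<open>x > 0\<close> by (simp add: v_def)
  define f where "f w = 1 - exp (- (r powr \<alpha> * \<bar>w\<bar> powr \<alpha>))" for w
  have char_D: "char D w = complex_of_real (1 - f w)" for w
    unfolding char_def D_def f_def using Y char_Y by (subst integral_distr) auto
  have tail_D: "D.prob {z. 2 / v \<le> \<bar>z\<bar>} = prob {\<omega>\<in>space M. x \<le> \<bar>Y \<omega>\<bar>}"
    unfolding D_def using Y \<open>x > 0\<close> by (subst measure_distr) (auto simp: v_def vimage_def Int_def conj_commute)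
  have "Re (CLBINT t:{-v..v}. 1 - char D t) = Re (CLBINT t:{-v..v}. complex_of_real (f t))"
    by (simp add: char_D)
  also have "\<dots> = (LBINT t:{-v..v}. f t)"
    by (simp add: set_integral_complex_of_real)
  also have "\<dots> \<le> (LBINT t:{-v..v}. r powr \<alpha> * v powr \<alpha>)"
  proof (rule set_integral_mono)
    have "continuous_on {-v..v} f"
      unfolding f_def using \<open>\<alpha> > 0\<close> by (intro continuous_intros continuous_on_powr') auto
    then show "set_integrable lborel {-v..v} f"
      unfolding set_integrable_def by (intro borel_integrable_compact) auto
    show "set_integrable lborel {-v..v} (\<lambda>t. r powr \<alpha> * v powr \<alpha>)"
      unfolding set_integrable_def by (intro borel_integrable_compact) (auto intro: continuous_intros)
    fix t assume "t \<in> {-v..v}"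
    have "f t \<le> r powr \<alpha> * \<bar>t\<bar> powr \<alpha>"
      unfolding f_def using exp_ge_add_one_self[of "- (r powr \<alpha> * \<bar>t\<bar> powr \<alpha>)"] by linarith
    also have "\<dots> \<le> r powr \<alpha> * v powr \<alpha>"
      using \<open>t \<in> {-v..v}\<close> \<open>\<alpha> > 0\<close> by (intro mult_left_mono powr_mono2) auto
    finally show "f t \<le> r powr \<alpha> * v powr \<alpha>" .
  qed
  also have "\<dots> = v * (2 * r powr \<alpha> * v powr \<alpha>)"
    using \<open>v > 0\<close> by (simp add: set_integral_const)
  finally have "v * prob {\<omega>\<in>space M. x \<le> \<bar>Y \<omega>\<bar>} \<le> v * (2 * r powr \<alpha> * v powr \<alpha>)"
    using D.truncation_inequality[OF \<open>v > 0\<close>] tail_D by simp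
  then have "prob {\<omega>\<in>space M. x \<le> \<bar>Y \<omega>\<bar>} \<le> 2 * r powr \<alpha> * v powr \<alpha>"
    using \<open>v > 0\<close> by simp
  also have "v powr \<alpha> = 2 powr \<alpha> / x powr \<alpha>"
    unfolding v_def using \<open>x > 0\<close> by (simp add: powr_divide)
  finally show ?thesis
    by (simp add: mult_ac)
qed

lemma sas_vector_increment_char:
  assumes "sas_vector \<alpha> M X {s, t}" and "\<alpha> > 0"
  shows "\<exists>r\<ge>0. \<forall>u. (CLINT \<omega>|M. iexp (u * (X t \<omega> - X s \<omega>)))
           = complex_of_real (exp (- (r powr \<alpha> * \<bar>u\<bar> powr \<alpha>)))"
proof -
  obtain \<Gamma> where \<Gamma>: "\<And>w :: _ \<Rightarrow> real. (CLINT \<omega>|M. iexp (\<Sum>i\<in>{s, t}. w i * X i \<omega>))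
      = complex_of_real (exp (- (\<integral>y. \<bar>\<Sum>i\<in>{s, t}. w i * y i\<bar> powr \<alpha> \<partial>\<Gamma>)))"
    using assms(1) unfolding sas_vector_def by blast
  define I where "I = (\<integral>y. \<bar>y t - y s\<bar> powr \<alpha> \<partial>\<Gamma>)"
  have "I \<ge> 0"
    unfolding I_def by (intro Bochner_Integration.integral_nonneg) auto
  define w where "w u i = (if i = t then u else 0) - (if i = s then u else 0)" for u :: real and i
  have sum_w: "(\<Sum>i\<in>{s, t}. w u i * y i) = u * (y t - y s)" for u and y :: "_ \<Rightarrow> real"
    unfolding w_def by (cases "s = t") (auto simp: algebra_simps)
  have "(CLINT \<omega>|M. iexp (u * (X t \<omega> - X s \<omega>)))
      = complex_of_real (exp (- ((I powr (1 / \<alpha>)) powr \<alpha> * \<bar>u\<bar> powr \<alpha>)))" for u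
  proof -
    have "(CLINT \<omega>|M. iexp (u * (X t \<omega> - X s \<omega>))) = (CLINT \<omega>|M. iexp (\<Sum>i\<in>{s, t}. w u i * X i \<omega>))"
      by (simp only: sum_w)
    also have "\<dots> = complex_of_real (exp (- (\<integral>y. \<bar>u\<bar> powr \<alpha> * \<bar>y t - y s\<bar> powr \<alpha> \<partial>\<Gamma>)))"
      unfolding \<Gamma> by (simp only: sum_w abs_mult powr_mult)
    also have "\<dots> = complex_of_real (exp (- ((I powr (1 / \<alpha>)) powr \<alpha> * \<bar>u\<bar> powr \<alpha>)))"
      using \<open>I \<ge> 0\<close> \<open>\<alpha> > 0\<close> by (simp add: I_def powr_powr mult.commute)
    finally show ?thesis .
  qed
  then show ?thesis
    by (intro exI[of _ "I powr (1 / \<alpha>)"]) auto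
qed

lemma scale_param_char:
  assumes "\<alpha> > 0"
    and "\<exists>r\<ge>0. \<forall>u. (CLINT \<omega>|M. iexp (u * (X t \<omega> - X s \<omega>)))
           = complex_of_real (exp (- (r powr \<alpha> * \<bar>u\<bar> powr \<alpha>)))"
  shows "scale_param \<alpha> M X s t \<ge> 0 \<and> (\<forall>u. (CLINT \<omega>|M. iexp (u * (X t \<omega> - X s \<omega>)))
           = complex_of_real (exp (- (scale_param \<alpha> M X s t powr \<alpha> * \<bar>u\<bar> powr \<alpha>))))"
proof -
  let ?char = "\<lambda>r. \<forall>u. (CLINT \<omega>|M. iexp (u * (X t \<omega> - X s \<omega>)))
           = complex_of_real (exp (- (r powr \<alpha> * \<bar>u\<bar> powr \<alpha>)))"
  have unique: "r = r'" if "r \<ge> 0" "?char r" "r' \<ge> 0" "?char r'" for r r'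
  proof -
    have "complex_of_real (exp (- (r powr \<alpha>))) = complex_of_real (exp (- (r' powr \<alpha>)))"
      using that(2)[rule_format, of 1] that(4)[rule_format, of 1] by simp
    then have "(r powr \<alpha>) powr (1 / \<alpha>) = (r' powr \<alpha>) powr (1 / \<alpha>)"
      by simp
    then show ?thesis
      using that(1,3) \<open>\<alpha> > 0\<close> by (simp add: powr_powr)
  qed
  show ?thesis
    unfolding scale_param_def by (rule theI') (use assms(2) unique in blast)
qed

lemma (in prob_space) sas_process_increment_tail:
  assumes "sas_process \<alpha> M X T" and "\<alpha> > 0" and "s \<in> T" and "t \<in> T" and "x > 0"
  shows "prob {\<omega>\<in>space M. x \<le> \<bar>X t \<omega> - X s \<omega>\<bar>}
           \<le> 2 * 2 powr \<alpha> * scale_param \<alpha> M X s t powr \<alpha> / x powr \<alpha>"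
proof -
  have "sas_vector \<alpha> M X {s, t}" and [measurable]: "X s \<in> borel_measurable M" "X t \<in> borel_measurable M"
    using assms(1,3,4) unfolding sas_process_def by auto
  then show ?thesis
    using scale_param_char[OF \<open>\<alpha> > 0\<close> sas_vector_increment_char[of \<alpha> M X s t]] assms(2,5)
    by (intro symmetric_stable_tail) auto
qed

lemma scale_param_nonneg:
  assumes "sas_process \<alpha> M X T" and "\<alpha> > 0" and "s \<in> T" and "t \<in> T"
  shows "0 \<le> scale_param \<alpha> M X s t"
proof -
  have "sas_vector \<alpha> M X {s, t}"
    using assms(1,3,4) unfolding sas_process_def by auto
  then show ?thesis
    using scale_param_char[OF assms(2) sas_vector_increment_char[of \<alpha> M X s t]] assms(2) by blast
qed

section \<open>Chaining\<close>

lemma (in prob_space) null_sets_if_prob_le_tendsto_zero: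
  assumes "A \<in> events" and "f \<longlonglongrightarrow> 0" and "\<And>n. prob A \<le> f n"
  shows "A \<in> null_sets M"
proof -
  have "prob A \<le> 0"
    using assms(2,3) by (intro LIMSEQ_le_const) auto
  then show ?thesis
    using assms(1) measure_nonneg[of M A] by (auto simp: emeasure_eq_measure intro: null_setsI)
qed

locale chaining = prob_space M for M :: "'a measure" +
  fixes X :: "'t \<Rightarrow> 'a \<Rightarrow> real" and T :: "'t set" and d :: "'t \<Rightarrow> 't \<Rightarrow> real"
    and \<alpha> K :: real and S :: "nat \<Rightarrow> 't set" and e c :: "nat \<Rightarrow> real"
  assumes random_variable_X: "t \<in> T \<Longrightarrow> random_variable borel (X t)"
    and increment_tail: "\<lbrakk>s \<in> T; t \<in> T; x > 0\<rbrakk> \<Longrightarrow>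
      prob {\<omega>\<in>space M. x \<le> \<bar>X t \<omega> - X s \<omega>\<bar>} \<le> K * d s t powr \<alpha> / x powr \<alpha>"
    and d_nonneg: "\<lbrakk>s \<in> T; t \<in> T\<rbrakk> \<Longrightarrow> 0 \<le> d s t"
    and K_nonneg: "0 \<le> K" and alpha_pos: "0 < \<alpha>"
    and finite_net: "finite (S k)" and net_subset: "S k \<subseteq> T"
    and net_covers: "t \<in> T \<Longrightarrow> \<exists>u\<in>S k. d t u \<le> e k"
    and e_pos: "0 < e k" and e_tendsto_zero: "e \<longlonglongrightarrow> 0"
    and card_net_le: "real (card (S (Suc k))) \<le> c k" and c_pos: "0 < c k"
    and chaining_sum_finite: "summable (\<lambda>k. (e k powr \<alpha> * c k) powr (1 / (\<alpha> + 1)))"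
begin

definition link :: "nat \<Rightarrow> 't \<Rightarrow> 't" where
  "link k u = (SOME v. v \<in> S k \<and> d u v \<le> e k)"

lemma link: "u \<in> T \<Longrightarrow> link k u \<in> S k \<and> d u (link k u) \<le> e k"
  unfolding link_def using someI_ex[OF net_covers[of u k, unfolded Bex_def]] by blast

lemma link_in_T: "u \<in> T \<Longrightarrow> link k u \<in> T"
  using link net_subset by blast

definition link_deviation :: "nat \<Rightarrow> 't \<Rightarrow> real \<Rightarrow> 'a set" where
  "link_deviation k u x = {\<omega>\<in>space M. x \<le> \<bar>X (link k u) \<omega> - X u \<omega>\<bar>}"

lemma link_deviation_event: "u \<in> T \<Longrightarrow> link_deviation k u x \<in> events"
  using random_variable_X[of u] random_variable_X[OF link_in_T[of u k]]
  unfolding link_deviation_def by measurable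

lemma prob_link_deviation_le:
  assumes "u \<in> T" and "x > 0"
  shows "prob (link_deviation k u x) \<le> K * e k powr \<alpha> / x powr \<alpha>"
proof -
  have "prob (link_deviation k u x) \<le> K * d u (link k u) powr \<alpha> / x powr \<alpha>"
    unfolding link_deviation_def using assms link_in_T by (intro increment_tail) auto
  also have "\<dots> \<le> K * e k powr \<alpha> / x powr \<alpha>"
    using link[OF assms(1)] d_nonneg[OF assms(1) link_in_T[OF assms(1)]] K_nonneg alpha_pos
    by (intro divide_right_mono mult_left_mono powr_mono2) auto
  finally show ?thesis .
qed

definition weight :: "nat \<Rightarrow> real" where
  "weight k = (e k powr \<alpha> * c k) powr (1 / (\<alpha> + 1))"

lemma weight_pos: "0 < weight k"
  using e_pos[of k] c_pos[of k] by (simp add: weight_def)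

lemma summable_weight: "summable weight"
  using chaining_sum_finite unfolding weight_def .

text \<open>The weights are chosen so that the union bound over the net \<open>S (Suc k)\<close> at threshold
  \<open>weight k\<close> costs exactly \<open>weight k\<close>.\<close>
lemma weight_balance: "c k * e k powr \<alpha> = weight k * weight k powr \<alpha>"
proof -
  have "weight k * weight k powr \<alpha> = weight k powr (\<alpha> + 1)"
    using weight_pos[of k] by (simp add: powr_add)
  also have "\<dots> = e k powr \<alpha> * c k"
    unfolding weight_def using e_pos[of k] c_pos[of k] alpha_pos by (simp add: powr_powr)
  finally show ?thesis
    by simp
qed

definition level_deviation :: "real \<Rightarrow> nat \<Rightarrow> 'a set" where
  "level_deviation r k = (\<Union>u\<in>S (Suc k). link_deviation k u (r * weight k))"

lemma level_deviation_event: "level_deviation r k \<in> events"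
  unfolding level_deviation_def
  using finite_net net_subset by (intro sets.finite_UN link_deviation_event) auto

lemma prob_level_deviation_le:
  assumes "r > 0"
  shows "prob (level_deviation r k) \<le> K / r powr \<alpha> * weight k"
proof -
  have x: "r * weight k > 0"
    using assms weight_pos[of k] by simp
  have "prob (level_deviation r k) \<le> (\<Sum>u\<in>S (Suc k). prob (link_deviation k u (r * weight k)))"
    unfolding level_deviation_def using finite_net net_subset
    by (intro finite_measure_subadditive_finite) (auto intro!: link_deviation_event)
  also have "\<dots> \<le> (\<Sum>u\<in>S (Suc k). K * e k powr \<alpha> / (r * weight k) powr \<alpha>)"
    using net_subset x by (intro sum_mono prob_link_deviation_le) auto
  also have "\<dots> = real (card (S (Suc k))) * (K * e k powr \<alpha> / (r * weight k) powr \<alpha>)"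
    by simp
  also have "\<dots> \<le> c k * (K * e k powr \<alpha> / (r * weight k) powr \<alpha>)"
    using card_net_le[of k] K_nonneg by (intro mult_right_mono) auto
  also have "\<dots> = K / r powr \<alpha> * (c k * e k powr \<alpha> / weight k powr \<alpha>)"
    using assms weight_pos[of k] by (simp add: powr_mult field_simps)
  also have "\<dots> = K / r powr \<alpha> * weight k"
    using weight_pos[of k] by (simp add: weight_balance)
  finally show ?thesis .
qed

lemma prob_some_level_deviation_le:
  assumes "r > 0"
  shows "prob (\<Union>k. level_deviation r k) \<le> K / r powr \<alpha> * suminf weight"
proof -
  have summable_bound: "summable (\<lambda>k. K / r powr \<alpha> * weight k)"
    using summable_weight by (rule summable_mult)
  have summable_prob: "summable (\<lambda>k. prob (level_deviation r k))"
    using prob_level_deviation_le[OF assms]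
    by (intro summable_comparison_test[OF _ summable_bound]) auto
  have "prob (\<Union>k. level_deviation r k) \<le> (\<Sum>k. prob (level_deviation r k))"
    using level_deviation_event summable_prob by (intro finite_measure_subadditive_countably) auto
  also have "\<dots> \<le> (\<Sum>k. K / r powr \<alpha> * weight k)"
    using prob_level_deviation_le[OF assms] summable_prob summable_bound by (rule suminf_le)
  also have "\<dots> = K / r powr \<alpha> * suminf weight"
    using summable_weight by (rule suminf_mult)
  finally show ?thesis .
qed

lemma bounded_on_nets_outside_level_deviations:
  assumes "\<omega> \<in> space M" and "\<omega> \<notin> (\<Union>k. level_deviation r k)" and "r \<ge> 0" and "u \<in> S m"
  shows "\<bar>X u \<omega>\<bar> \<le> Max ((\<lambda>v. \<bar>X v \<omega>\<bar>) ` S 0) + r * suminf weight"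
proof -
  define B0 where "B0 = Max ((\<lambda>v. \<bar>X v \<omega>\<bar>) ` S 0)"
  have partial: "\<forall>u\<in>S m. \<bar>X u \<omega>\<bar> \<le> B0 + r * (\<Sum>k<m. weight k)" for m
  proof (induction m)
    case 0
    show ?case
      unfolding B0_def using finite_net by auto
  next
    case (Suc m)
    show ?case
    proof
      fix u assume u: "u \<in> S (Suc m)"
      then have "u \<in> T"
        using net_subset by auto
      have "\<omega> \<notin> link_deviation m u (r * weight m)"
        using assms(2) u unfolding level_deviation_def by auto
      then have "\<bar>X u \<omega>\<bar> \<le> \<bar>X (link m u) \<omega>\<bar> + r * weight m"
        using assms(1) unfolding link_deviation_def by auto
      also have "\<dots> \<le> B0 + r * (\<Sum>k<m. weight k) + r * weight m"
        using Suc.IH link[OF \<open>u \<in> T\<close>, of m] by auto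
      finally show "\<bar>X u \<omega>\<bar> \<le> B0 + r * (\<Sum>k<Suc m. weight k)"
        by (simp add: distrib_left add.assoc)
    qed
  qed
  have "r * (\<Sum>k<m. weight k) \<le> r * suminf weight"
    using summable_weight weight_pos assms(3)
    by (intro mult_left_mono sum_le_suminf) (auto intro: less_imp_le)
  moreover have "\<bar>X u \<omega>\<bar> \<le> B0 + r * (\<Sum>k<m. weight k)"
    using partial[of m] assms(4) by blast
  ultimately show ?thesis
    unfolding B0_def by linarith
qed

lemma AE_bounded_on_nets: "AE \<omega> in M. \<exists>B. \<forall>k. \<forall>u\<in>S k. \<bar>X u \<omega>\<bar> \<le> B"
proof -
  define Z where "Z = (\<Inter>n. \<Union>k. level_deviation (Suc n) k)"
  have null: "Z \<in> null_sets M"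
  proof (rule null_sets_if_prob_le_tendsto_zero)
    show "Z \<in> events"
      unfolding Z_def using level_deviation_event by auto
    have "(\<lambda>n. real (Suc n) powr - \<alpha>) \<longlonglongrightarrow> 0"
      using alpha_pos
      by (intro tendsto_neg_powr filterlim_compose[OF filterlim_real_sequentially filterlim_Suc]) auto
    then show "(\<lambda>n. K * real (Suc n) powr - \<alpha> * suminf weight) \<longlonglongrightarrow> 0"
      by (rule tendsto_mult_left_zero[OF tendsto_mult_right_zero])
    fix n
    have "prob Z \<le> prob (\<Union>k. level_deviation (Suc n) k)"
      unfolding Z_def using level_deviation_event by (intro finite_measure_mono) auto
    also have "\<dots> \<le> K / real (Suc n) powr \<alpha> * suminf weight"
      by (intro prob_some_level_deviation_le) simp
    finally show "prob Z \<le> K * real (Suc n) powr - \<alpha> * suminf weight"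
      by (simp add: powr_minus divide_inverse)
  qed
  have "\<exists>B. \<forall>k. \<forall>u\<in>S k. \<bar>X u \<omega>\<bar> \<le> B" if "\<omega> \<in> space M" and "\<omega> \<notin> Z" for \<omega>
  proof -
    obtain n where n: "\<omega> \<notin> (\<Union>k. level_deviation (Suc n) k)"
      using \<open>\<omega> \<notin> Z\<close> unfolding Z_def by blast
    show ?thesis
      using bounded_on_nets_outside_level_deviations[OF \<open>\<omega> \<in> space M\<close> n of_nat_0_le_iff] by blast
  qed
  then show ?thesis
    by (intro AE_I'[OF null]) (use not_le in blast)
qed

lemma AE_link_close:
  assumes "t \<in> T"
  shows "AE \<omega> in M. \<exists>k. \<bar>X (link k t) \<omega> - X t \<omega>\<bar> < 1"
proof -
  have "(\<Inter>k. link_deviation k t 1) \<in> null_sets M"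
  proof (rule null_sets_if_prob_le_tendsto_zero)
    show "(\<Inter>k. link_deviation k t 1) \<in> events"
      using link_deviation_event[OF assms] by auto
    have "(\<lambda>k. e k powr \<alpha>) \<longlonglongrightarrow> 0"
      using e_pos alpha_pos
      by (intro tendsto_zero_powrI[OF e_tendsto_zero tendsto_const]) (auto intro: always_eventually less_imp_le)
    then show "(\<lambda>k. K * e k powr \<alpha>) \<longlonglongrightarrow> 0"
      by (rule tendsto_mult_right_zero)
    fix k
    have "prob (\<Inter>k. link_deviation k t 1) \<le> prob (link_deviation k t 1)"
      using link_deviation_event[OF assms] by (intro finite_measure_mono) auto
    then show "prob (\<Inter>k. link_deviation k t 1) \<le> K * e k powr \<alpha>"
      using prob_link_deviation_le[OF assms, of 1 k] by simp
  qed
  then show ?thesis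
    by (rule AE_I') (auto simp: link_deviation_def not_less)
qed

theorem AE_bounded:
  assumes "separable_process M X T d"
  shows "AE \<omega> in M. \<exists>B. \<forall>t\<in>T. \<bar>X t \<omega>\<bar> \<le> B"
proof -
  obtain T0 N where "countable T0" and "T0 \<subseteq> T" and "N \<in> null_sets M"
    and sequences: "\<forall>\<omega>\<in>space M - N. \<forall>t\<in>T. \<exists>s :: nat \<Rightarrow> 't. (\<forall>n. s n \<in> T0) \<and>
            (\<lambda>n. d (s n) t) \<longlonglongrightarrow> 0 \<and> (\<lambda>n. X (s n) \<omega>) \<longlonglongrightarrow> X t \<omega>"
    using assms unfolding separable_process_def by blast
  have "AE \<omega> in M. \<forall>t\<in>T0. \<exists>k. \<bar>X (link k t) \<omega> - X t \<omega>\<bar> < 1"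
    using \<open>countable T0\<close> \<open>T0 \<subseteq> T\<close> AE_link_close by (auto simp: AE_ball_countable)
  with AE_bounded_on_nets AE_space AE_not_in[OF \<open>N \<in> null_sets M\<close>] show ?thesis
  proof eventually_elim
    case (elim \<omega>)
    then obtain B where B: "\<And>k u. u \<in> S k \<Longrightarrow> \<bar>X u \<omega>\<bar> \<le> B"
      by blast
    have bound_T0: "\<bar>X t \<omega>\<bar> \<le> B + 1" if t: "t \<in> T0" for t
    proof -
      obtain k where "\<bar>X (link k t) \<omega> - X t \<omega>\<bar> < 1"
        using elim t by blast
      moreover have "\<bar>X (link k t) \<omega>\<bar> \<le> B"
        using B link t \<open>T0 \<subseteq> T\<close> by blast
      ultimately show ?thesis
        by linarith
    qed
    have "\<bar>X t \<omega>\<bar> \<le> B + 1" if t: "t \<in> T" for t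
    proof -
      obtain s :: "nat \<Rightarrow> 't" where "\<forall>n. s n \<in> T0" and "(\<lambda>n. X (s n) \<omega>) \<longlonglongrightarrow> X t \<omega>"
        using sequences[rule_format, of \<omega> t] elim t by blast
      then show ?thesis
        using bound_T0 by (intro LIMSEQ_le_const2[OF tendsto_rabs]) auto
    qed
    then show ?case
      by blast
  qed
qed

end

section \<open>Metric entropy\<close>

lemma pdiam_upper:
  assumes "bdd_above {d s t | s t. s \<in> T \<and> t \<in> T}" and "s \<in> T" and "t \<in> T"
  shows "d s t \<le> pdiam d T"
  unfolding pdiam_def using assms by (intro cSup_upper) auto

lemma summable_dyadic_samples_if_nn_integral_finite:
  fixes h :: "real \<Rightarrow> real"
  assumes "\<sigma> > 0" and antimono_h: "antimono_on {0<..\<sigma>} h"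
    and h_nonneg: "\<And>u. 0 < u \<Longrightarrow> u \<le> \<sigma> \<Longrightarrow> 0 \<le> h u"
    and finite_integral: "(\<integral>\<^sup>+ u \<in> {0<..\<sigma>}. ennreal (h u) \<partial>lborel) < \<infinity>"
  shows "summable (\<lambda>k. \<sigma> / 2 ^ k * h (\<sigma> / 2 ^ k))"
proof -
  define f where "f k = \<sigma> / 2 ^ k" for k :: nat
  define I where "I k = {f (Suc k) <.. f k}" for k
  have f_pos: "0 < f k" for k
    using \<open>\<sigma> > 0\<close> by (simp add: f_def)
  have f_le: "f l \<le> f k" if "k \<le> l" for k l
    unfolding f_def using \<open>\<sigma> > 0\<close> that by (intro divide_left_mono power_increasing) auto
  have h_f_nonneg: "0 \<le> h (f k)" for k
    using f_pos[of k] f_le[of 0 k] by (intro h_nonneg) (auto simp: f_def)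
  have "disjoint_family I"
  proof -
    have "I k \<inter> I l = {}" if "k < l" for k l
      using f_le[of "Suc k" l] that unfolding I_def by auto
    then show ?thesis
      unfolding disjoint_family_on_def by (metis inf_commute linorder_neqE_nat)
  qed
  have shell: "ennreal (f k / 2 * h (f k)) = (\<integral>\<^sup>+ u. ennreal (h (f k)) * indicator (I k) u \<partial>lborel)" for k
  proof -
    have "emeasure lborel (I k) = ennreal (f k / 2)"
      using f_pos[of k] by (simp add: I_def f_def)
    then show ?thesis
      using f_pos[of k] h_f_nonneg[of k] by (simp add: nn_integral_cmult_indicator I_def ac_simps flip: ennreal_mult)
  qed
  have below_h: "(\<Sum>k. ennreal (h (f k)) * indicator (I k) u) \<le> ennreal (h u) * indicator {0<..\<sigma>} u" for u
  proof (cases "\<exists>j. u \<in> I j")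
    case True
    then obtain j where "u \<in> I j"
      by blast
    then have "0 < u" "u \<le> f j" "f j \<le> \<sigma>"
      using f_pos[of "Suc j"] f_le[of 0 j] by (auto simp: I_def f_def)
    then show ?thesis
      using suminf_cmult_indicator[OF \<open>disjoint_family I\<close> \<open>u \<in> I j\<close>]
        monotone_onD[OF antimono_h, of u "f j"]
      by (simp add: ennreal_leI)
  next
    case False
    then show ?thesis
      by (simp add: indicator_def)
  qed
  have "(\<Sum>k. ennreal (f k / 2 * h (f k))) = (\<integral>\<^sup>+ u. (\<Sum>k. ennreal (h (f k)) * indicator (I k) u) \<partial>lborel)"
    unfolding shell I_def by (intro nn_integral_suminf[symmetric]) measurable
  also have "\<dots> \<le> (\<integral>\<^sup>+ u \<in> {0<..\<sigma>}. ennreal (h u) \<partial>lborel)"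
    by (intro nn_integral_mono below_h)
  also have "\<dots> < \<infinity>"
    by (rule finite_integral)
  finally have "summable (\<lambda>k. f k / 2 * h (f k))"
    using f_pos h_f_nonneg by (intro summable_suminf_not_top) (auto simp: less_imp_le)
  then show ?thesis
    using summable_mult[of _ 2] unfolding f_def by fastforce
qed

lemma summable_dyadic_entropy_sum:
  fixes \<Psi> :: "real \<Rightarrow> real"
  assumes "\<sigma> > 0" and "\<alpha> > 0" and antimono_\<Psi>: "antimono_on {0<..} \<Psi>"
    and \<Psi>_nonneg: "\<And>\<epsilon>. 0 < \<epsilon> \<Longrightarrow> 0 \<le> \<Psi> \<epsilon>"
    and finite_integral: "(\<integral>\<^sup>+ u \<in> {0<..\<sigma>}. ennreal ((\<Psi> u / u) powr (1 / (\<alpha> + 1))) \<partial>lborel) < \<infinity>"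
  shows "summable (\<lambda>k. ((\<sigma> / 2 ^ k) powr \<alpha> * \<Psi> (\<sigma> / 2 ^ Suc k)) powr (1 / (\<alpha> + 1)))"
proof -
  define p where "p = 1 / (\<alpha> + 1)"
  have "0 < p" and "\<alpha> * p = 1 - p"
    using \<open>\<alpha> > 0\<close> by (auto simp: p_def field_simps)
  define h where "h u = (\<Psi> u / u) powr p" for u
  have antimono_h: "antimono_on {0<..\<sigma>} h"
  proof (rule monotone_onI)
    fix u v assume "u \<in> {0<..\<sigma>}" "v \<in> {0<..\<sigma>}" "u \<le> v"
    then have "\<Psi> v / v \<le> \<Psi> u / u"
      using monotone_onD[OF antimono_\<Psi>, of u v] \<Psi>_nonneg[of v] by (intro frac_le) auto
    then show "h v \<le> h u"
      unfolding h_def using \<open>v \<in> {0<..\<sigma>}\<close> \<Psi>_nonneg[of v] \<open>0 < p\<close> by (intro powr_mono2) auto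
  qed
  have integral_h: "(\<integral>\<^sup>+ u \<in> {0<..\<sigma>}. ennreal (h u) \<partial>lborel) < \<infinity>"
    using finite_integral by (simp add: h_def p_def)
  have "summable (\<lambda>k. \<sigma> / 2 ^ k * h (\<sigma> / 2 ^ k))"
    by (rule summable_dyadic_samples_if_nn_integral_finite[OF \<open>\<sigma> > 0\<close> antimono_h _ integral_h])
       (simp add: h_def)
  then have "summable (\<lambda>k. 2 powr (\<alpha> * p) * (\<sigma> / 2 ^ Suc k * h (\<sigma> / 2 ^ Suc k)))"
    using summable_Suc_iff[of "\<lambda>k. \<sigma> / 2 ^ k * h (\<sigma> / 2 ^ k)"] by (intro summable_mult) blast
  moreover have "((\<sigma> / 2 ^ k) powr \<alpha> * \<Psi> (\<sigma> / 2 ^ Suc k)) powr p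
      = 2 powr (\<alpha> * p) * (\<sigma> / 2 ^ Suc k * h (\<sigma> / 2 ^ Suc k))" for k
  proof -
    define f where "f = \<sigma> / 2 ^ Suc k"
    have "f > 0" and "\<Psi> f \<ge> 0"
      using \<open>\<sigma> > 0\<close> \<Psi>_nonneg by (auto simp: f_def)
    have "((\<sigma> / 2 ^ k) powr \<alpha> * \<Psi> f) powr p = ((2 * f) powr \<alpha> * \<Psi> f) powr p"
      by (simp add: f_def)
    also have "\<dots> = 2 powr (\<alpha> * p) * f powr (\<alpha> * p) * \<Psi> f powr p"
      using \<open>f > 0\<close> \<open>\<Psi> f \<ge> 0\<close> by (simp add: powr_mult powr_powr)
    also have "\<dots> = 2 powr (\<alpha> * p) * (f * (\<Psi> f / f) powr p)"
      using \<open>f > 0\<close> \<open>\<Psi> f \<ge> 0\<close> \<open>\<alpha> * p = 1 - p\<close> by (simp add: powr_divide powr_diff)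
    finally show ?thesis
      unfolding h_def f_def p_def by simp
  qed
  ultimately show ?thesis
    unfolding p_def by simp
qed

lemma covering_number_attained:
  assumes "rel_compact d T" and "\<epsilon> > 0"
  obtains S where "finite S" and "S \<subseteq> T" and "\<forall>t\<in>T. \<exists>s\<in>S. d t s \<le> \<epsilon>"
    and "card S = covering_number d T \<epsilon>"
proof -
  let ?cards = "{card S | S. finite S \<and> S \<subseteq> T \<and> (\<forall>t\<in>T. \<exists>s\<in>S. d t s \<le> \<epsilon>)}"
  obtain S0 where "finite S0" "S0 \<subseteq> T" "\<forall>t\<in>T. \<exists>s\<in>S0. d t s \<le> \<epsilon>"
    using assms(1)[unfolded rel_compact_def, rule_format, OF assms(2)] by (elim exE conjE)
  then have "?cards \<noteq> {}"
    by blast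
  then have "Inf ?cards \<in> ?cards"
    by (rule Inf_nat_def1)
  then obtain S where "finite S" "S \<subseteq> T" "\<forall>t\<in>T. \<exists>s\<in>S. d t s \<le> \<epsilon>" "card S = Inf ?cards"
    by auto
  then show ?thesis
    using that unfolding covering_number_def by simp
qed

lemma covering_number_ge_one:
  assumes "rel_compact d T" and "T \<noteq> {}" and "\<epsilon> > 0"
  shows "1 \<le> covering_number d T \<epsilon>"
proof -
  obtain S where "finite S" "\<forall>t\<in>T. \<exists>s\<in>S. d t s \<le> \<epsilon>" "card S = covering_number d T \<epsilon>"
    using covering_number_attained[OF assms(1,3)] by metis
  moreover have "S \<noteq> {}"
    using \<open>\<forall>t\<in>T. \<exists>s\<in>S. d t s \<le> \<epsilon>\<close> \<open>T \<noteq> {}\<close> by blast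
  ultimately show ?thesis
    by (simp add: Suc_le_eq card_gt_0_iff flip: \<open>card S = covering_number d T \<epsilon>\<close>)
qed

lemma chaining_nets_exist:
  fixes d :: "'t \<Rightarrow> 't \<Rightarrow> real" and \<Psi> :: "real \<Rightarrow> real"
  assumes "T \<noteq> {}" and "rel_compact d T" and "\<alpha> > 0"
    and diam: "\<And>s t. s \<in> T \<Longrightarrow> t \<in> T \<Longrightarrow> d s t \<le> \<sigma>"
    and covering: "\<And>\<epsilon>. \<epsilon> > 0 \<Longrightarrow> real (covering_number d T \<epsilon>) \<le> \<Psi> \<epsilon>"
    and "antimono_on {0<..} \<Psi>"
    and "(\<integral>\<^sup>+ u \<in> {0<..\<sigma>}. ennreal ((\<Psi> u / u) powr (1 / (\<alpha> + 1))) \<partial>lborel) < \<infinity>"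
  obtains S :: "nat \<Rightarrow> 't set" and e c :: "nat \<Rightarrow> real"
  where "\<And>k. finite (S k)" and "\<And>k. S k \<subseteq> T" and "\<And>k t. t \<in> T \<Longrightarrow> \<exists>u\<in>S k. d t u \<le> e k"
    and "\<And>k. 0 < e k" and "e \<longlonglongrightarrow> 0"
    and "\<And>k. real (card (S (Suc k))) \<le> c k" and "\<And>k. 0 < c k"
    and "summable (\<lambda>k. (e k powr \<alpha> * c k) powr (1 / (\<alpha> + 1)))"
proof (cases "\<sigma> > 0")
  case True
  define e where "e k = \<sigma> / 2 ^ k" for k :: nat
  have e_pos: "e k > 0" for k
    using True by (simp add: e_def)
  have "\<exists>S. finite S \<and> S \<subseteq> T \<and> (\<forall>t\<in>T. \<exists>s\<in>S. d t s \<le> e k) \<and> card S = covering_number d T (e k)"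
    for k by (rule covering_number_attained[OF assms(2) e_pos]) blast
  then have "\<exists>S. \<forall>k. finite (S k) \<and> S k \<subseteq> T \<and> (\<forall>t\<in>T. \<exists>s\<in>S k. d t s \<le> e k)
      \<and> card (S k) = covering_number d T (e k)"
    by (intro choice allI)
  then obtain S where S: "\<And>k. finite (S k) \<and> S k \<subseteq> T \<and> (\<forall>t\<in>T. \<exists>s\<in>S k. d t s \<le> e k)
      \<and> card (S k) = covering_number d T (e k)"
    by blast
  have \<Psi>_ge_one: "1 \<le> \<Psi> \<epsilon>" if "\<epsilon> > 0" for \<epsilon>
    using covering_number_ge_one[OF assms(2,1) that] covering[OF that] by linarith
  show ?thesis
  proof (rule that[of S e "\<lambda>k. \<Psi> (e (Suc k))"])
    show "e \<longlonglongrightarrow> 0"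
      unfolding e_def by (intro LIMSEQ_divide_realpow_zero) auto
    show "real (card (S (Suc k))) \<le> \<Psi> (e (Suc k))" for k
      using S covering e_pos by simp
    show "0 < \<Psi> (e (Suc k))" for k
      using \<Psi>_ge_one[OF e_pos[of "Suc k"]] by linarith
    show "summable (\<lambda>k. (e k powr \<alpha> * \<Psi> (e (Suc k))) powr (1 / (\<alpha> + 1)))"
      unfolding e_def
      by (rule summable_dyadic_entropy_sum[OF True assms(3,6) order_trans[OF zero_le_one \<Psi>_ge_one] assms(7)])
    show "finite (S k)" and "S k \<subseteq> T" and "0 < e k" for k
      using S e_pos by simp_all
    show "\<exists>u\<in>S k. d t u \<le> e k" if "t \<in> T" for k t
      using S that by blast
  qed
next
  case False
  \<comment> \<open>Then all distances are \<open>\<le> 0\<close>, so any single point is a net at every scale.\<close>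
  obtain t0 where "t0 \<in> T"
    using \<open>T \<noteq> {}\<close> by blast
  define e :: "nat \<Rightarrow> real" where "e k = (1 / 2) ^ k" for k
  have geometric: "(e k powr \<alpha> * 1) powr (1 / (\<alpha> + 1)) = ((1 / 2) powr (\<alpha> / (\<alpha> + 1))) ^ k" for k
  proof -
    have "e k = (1 / 2) powr real k"
      unfolding e_def by (simp add: powr_realpow)
    then show ?thesis
      by (simp add: powr_powr powr_power mult_ac)
  qed
  show ?thesis
  proof (rule that[of "\<lambda>k. {t0}" e "\<lambda>k. 1"])
    show "e \<longlonglongrightarrow> 0"
      unfolding e_def by (intro LIMSEQ_realpow_zero) auto
    show "\<exists>u\<in>{t0}. d t u \<le> e k" if "t \<in> T" for k t
    proof -
      have "0 \<le> e k"
        by (simp add: e_def)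
      then show ?thesis
        using diam[OF that \<open>t0 \<in> T\<close>] False by simp
    qed
    show "summable (\<lambda>k. (e k powr \<alpha> * 1) powr (1 / (\<alpha> + 1)))"
      unfolding geometric using \<open>\<alpha> > 0\<close> powr_less_mono2[of "\<alpha> / (\<alpha> + 1)" "1 / 2" 1]
      by (intro summable_geometric) simp
  qed (use \<open>t0 \<in> T\<close> in \<open>simp_all add: e_def\<close>)
qed

section \<open>Boundedness of symmetric stable processes\<close>

theorem corollary1:
  fixes \<alpha> :: real and M :: "'a measure" and X :: "'t \<Rightarrow> 'a \<Rightarrow> real" and T :: "'t set"
    and \<Psi> :: "real \<Rightarrow> real" and C1 :: real
  defines "\<rho> \<equiv> scale_param \<alpha> M X"
  defines "\<sigma> \<equiv> pdiam \<rho> T"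
  assumes "prob_space M"
    and "0 < \<alpha>" and "\<alpha> < 2"
    and "T \<noteq> {}"
    and "sas_process \<alpha> M X T"
    and "separable_process M X T \<rho>"
    and "bdd_above {\<rho> s t | s t. s \<in> T \<and> t \<in> T}"
    and "rel_compact \<rho> T"
    and "\<And>\<epsilon>. \<epsilon> > 0 \<Longrightarrow> real (covering_number \<rho> T \<epsilon>) \<le> \<Psi> \<epsilon>"
    and "antimono_on {0<..} \<Psi>"
    and "continuous_on {0<..} \<Psi>"
    and "C1 > 1"
    and "\<And>\<epsilon>. 0 < \<epsilon> \<Longrightarrow> \<epsilon> \<le> \<sigma> \<Longrightarrow> C1 * \<Psi> \<epsilon> \<le> \<Psi> (\<epsilon> / 2)"
    and "(\<integral>\<^sup>+ u \<in> {0<..\<sigma>}. ennreal ((\<Psi> u / u) powr (1 / (\<alpha> + 1))) \<partial>lborel) < \<infinity>"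
  shows "AE \<omega> in M. \<exists>B. \<forall>t\<in>T. \<bar>X t \<omega>\<bar> \<le> B"
proof -
  interpret prob_space M by fact
  show ?thesis
  proof (rule chaining_nets_exist[OF assms(6,10,4) pdiam_upper[OF assms(9), folded \<sigma>_def] assms(11,12,16)])
    fix S e c
    assume "\<And>k. finite (S k)" and "\<And>k. S k \<subseteq> T" and "\<And>k t. t \<in> T \<Longrightarrow> \<exists>u\<in>S k. \<rho> t u \<le> e k"
      and "\<And>k. 0 < e k" and "e \<longlonglongrightarrow> 0" and "\<And>k. real (card (S (Suc k))) \<le> c k" and "\<And>k. 0 < c k"
      and "summable (\<lambda>k. (e k powr \<alpha> * c k) powr (1 / (\<alpha> + 1)))"
    then interpret chaining M X T \<rho> \<alpha> "2 * 2 powr \<alpha>" S e c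
    proof unfold_locales
      show "random_variable borel (X t)" if "t \<in> T" for t
        using assms(7) that unfolding sas_process_def by blast
      show "prob {\<omega> \<in> space M. x \<le> \<bar>X t \<omega> - X s \<omega>\<bar>} \<le> 2 * 2 powr \<alpha> * \<rho> s t powr \<alpha> / x powr \<alpha>"
        if "s \<in> T" and "t \<in> T" and "x > 0" for s t x
        unfolding \<rho>_def by (rule sas_process_increment_tail[OF assms(7,4) that])
      show "0 \<le> \<rho> s t" if "s \<in> T" and "t \<in> T" for s t
        unfolding \<rho>_def by (rule scale_param_nonneg[OF assms(7,4) that])
    qed (use assms(4) in simp_all)
    show ?thesis
      by (rule AE_bounded[OF assms(8)])
  qed
qed

end
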